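(* Consider the augmented system below with $r=m$, where $\phi$ has relative degree $\rho\in\mathbb{N}^r$ and $\Omega_g(t,x)$ is invertible for all $(t,x)\in[t_0,\infty)\times\mathbb{R}^n$. Let $x_0\in\mathbb{R}^n$ satisfy $\phi_k(t_0,x_0)<0$ for all $k$, let $T>t_0$, and let $w\in L^1([t_0,T],\mathbb{R}^r)$ be any integrable input such that the augmented initial value problem has an absolutely continuous solution $x_A(t)=(x(t),\tilde z(t))$ on $[t_0,T]$ (satisfying the ODE almost everywhere). Then the first component $x(t)$ satisfies $\phi(t,x(t))\le0$ (componentwise) for all $t\in[t_0,T]$.
   Context: Setting: $f\in C^\infty([t_0,\infty)\times\mathbb{R}^n,\mathbb{R}^n)$, $g\in C^\infty([t_0,\infty)\times\mathbb{R}^n,\mathbb{R}^{n\times m})$, original system $\dot x=f(t,x)+g(t,x)u$. Time-varying Lie derivatives: $L_f^0\psi=\psi$, $L_f^j\psi=\frac{\partial L_f^{j-1}\psi}{\partial x}f+\frac{\partial L_f^{j-1}\psi}{\partial t}$, $L_gL_f^j\psi=\frac{\partial L_f^j\psi}{\partial x}g\in\mathbb{R}^{1\times m}$. $\phi\in C^\infty([t_0,\infty)\times\mathbb{R}^n,\mathbb{R}^r)$ has relative degree $\rho$ if for each $k$, $L_gL_f^i\phi_k\equiv0$ for $i\in\{0,\dots,\rho_k-2\}$ and $L_gL_f^{\rho_k-1}\phi_k(t,x)\ne0$ everywhere. Define $\Omega_g(t,x)\in\mathbb{R}^{r\times m}$ with $k$-th row $L_gL_f^{\rho_k-1}\phi_k(t,x)$.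 Augmented state $x_A=(x,\tilde z)$ with $\tilde z=(z_1,z_1^{(1)},\dots,z_1^{(\rho_1-1)},\dots,z_r,\dots,z_r^{(\rho_r-1)})$ (the $z_k^{(j)}$ being independent coordinates). Let $S_{k,i-1}=\tfrac12\sum_{j=1}^{i-1}\binom{i}{j}z_k^{(i-j)}z_k^{(j)}$, $\Omega_f(t,x,\tilde z)\in\mathbb{R}^r$ with $k$-th entry $S_{k,\rho_k-1}+L_f^{\rho_k}\phi_k(t,x)$, and $D(z)=\mathrm{diag}(z_1,\dots,z_r)$. The augmented dynamics with input $w\in\mathbb{R}^r$ are: $\dot x=f(t,x)+g(t,x)u$ with $u=-\Omega_g(t,x)^{-1}\big(\Omega_f(t,x,\tilde z)+D(z)w\big)$; $\frac{d}{dt}z_k^{(j)}=z_k^{(j+1)}$ for $0\le j\le\rho_k-2$; $\frac{d}{dt}z_k^{(\rho_k-1)}=w_k$. Initial conditions: $x(t_0)=x_0$, $z_k(t_0)=\sqrt{-2\phi_k(t_0,x_0)}$, and recursively $z_k^{(i)}(t_0)=-\big(L_f^i\phi_k(t_0,x_0)+S_{k,i-1}(t_0)\big)/z_k(t_0)$ for $i\in\{1,\dots,\rho_k-1\}$. *)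

theory Defs
  imports "HOL-Analysis.Analysis"
begin

definition absolutely_continuous_on :: "real set \<Rightarrow> (real \<Rightarrow> 'a::real_normed_vector) \<Rightarrow> bool" where
  "absolutely_continuous_on S h \<longleftrightarrow>
     (\<forall>\<epsilon>>0. \<exists>\<delta>>0. \<forall>D. finite D \<and> (\<forall>(u,v)\<in>D. u \<le> v \<and> {u..v} \<subseteq> S)
        \<and> disjoint_family_on (\<lambda>(u,v). {u<..<v}) D
        \<and> (\<Sum>(u,v)\<in>D. v - u) < \<delta>
        \<longrightarrow> (\<Sum>(u,v)\<in>D. norm (h v - h u)) < \<epsilon>)"

primrec Ck_on :: "nat \<Rightarrow> ('a::real_normed_vector) set \<Rightarrow> ('a \<Rightarrow> 'b::real_normed_vector) \<Rightarrow> bool" where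
  "Ck_on 0 S h \<longleftrightarrow> continuous_on S h"
| "Ck_on (Suc k) S h \<longleftrightarrow>
     (\<exists>h'. (\<forall>p\<in>S. (h has_derivative h' p) (at p within S)) \<and> (\<forall>v. Ck_on k S (\<lambda>p. h' p v)))"

definition smooth_on :: "('a::real_normed_vector) set \<Rightarrow> ('a \<Rightarrow> 'b::real_normed_vector) \<Rightarrow> bool" where
  "smooth_on S h \<longleftrightarrow> (\<forall>k. Ck_on k S h)"

definition dom :: "real \<Rightarrow> (real \<times> (real^'n)) set" where
  "dom t0 = {t0..} \<times> UNIV"

definition Dpsi :: "real \<Rightarrow> (real \<Rightarrow> real^'n \<Rightarrow> real) \<Rightarrow> real \<Rightarrow> real^'n \<Rightarrow> (real \<times> (real^'n) \<Rightarrow> real)" where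
  "Dpsi t0 \<psi> t x = frechet_derivative (\<lambda>(s,y). \<psi> s y) (at (t,x) within dom t0)"

definition Lf :: "real \<Rightarrow> (real \<Rightarrow> real^'n \<Rightarrow> real^'n) \<Rightarrow> (real \<Rightarrow> real^'n \<Rightarrow> real) \<Rightarrow> real \<Rightarrow> real^'n \<Rightarrow> real" where
  "Lf t0 f \<psi> = (\<lambda>t x. Dpsi t0 \<psi> t x (1, f t x))"

definition Lf_pow :: "real \<Rightarrow> (real \<Rightarrow> real^'n \<Rightarrow> real^'n) \<Rightarrow> nat \<Rightarrow> (real \<Rightarrow> real^'n \<Rightarrow> real) \<Rightarrow> real \<Rightarrow> real^'n \<Rightarrow> real" where
  "Lf_pow t0 f j \<psi> = (Lf t0 f ^^ j) \<psi>"

definition LgLf :: "real \<Rightarrow> (real \<Rightarrow> real^'n \<Rightarrow> real^'n) \<Rightarrow> (real \<Rightarrow> real^'n \<Rightarrow> real^'m^'n)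
     \<Rightarrow> nat \<Rightarrow> (real \<Rightarrow> real^'n \<Rightarrow> real) \<Rightarrow> real \<Rightarrow> real^'n \<Rightarrow> real^'m" where
  "LgLf t0 f g j \<psi> t x = (\<chi> i. Dpsi t0 (Lf_pow t0 f j \<psi>) t x (0, column i (g t x)))"

definition comp :: "(real \<Rightarrow> real^'n \<Rightarrow> real^'r) \<Rightarrow> 'r \<Rightarrow> real \<Rightarrow> real^'n \<Rightarrow> real" where
  "comp \<phi> k = (\<lambda>t x. \<phi> t x $ k)"

definition has_relative_degree :: "real \<Rightarrow> (real \<Rightarrow> real^'n \<Rightarrow> real^'n) \<Rightarrow> (real \<Rightarrow> real^'n \<Rightarrow> real^'m^'n)
     \<Rightarrow> (real \<Rightarrow> real^'n \<Rightarrow> real^'r) \<Rightarrow> ('r \<Rightarrow> nat) \<Rightarrow> bool" where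
  "has_relative_degree t0 f g \<phi> \<rho> \<longleftrightarrow>
     (\<forall>k. 1 \<le> \<rho> k
        \<and> (\<forall>i. i + 2 \<le> \<rho> k \<longrightarrow> (\<forall>(t,x)\<in>dom t0. LgLf t0 f g i (comp \<phi> k) t x = 0))
        \<and> (\<forall>(t,x)\<in>dom t0. LgLf t0 f g (\<rho> k - 1) (comp \<phi> k) t x \<noteq> 0))"

definition Omega_g :: "real \<Rightarrow> (real \<Rightarrow> real^'n \<Rightarrow> real^'n) \<Rightarrow> (real \<Rightarrow> real^'n \<Rightarrow> real^'m^'n)
     \<Rightarrow> (real \<Rightarrow> real^'n \<Rightarrow> real^'r) \<Rightarrow> ('r \<Rightarrow> nat) \<Rightarrow> real \<Rightarrow> real^'n \<Rightarrow> real^'m^'r" where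
  "Omega_g t0 f g \<phi> \<rho> t x = (\<chi> k. LgLf t0 f g (\<rho> k - 1) (comp \<phi> k) t x)"

text \<open>S_{k,i-1} = 1/2 \<Sum>_{j=1}^{i-1} (i choose j) z_k^(i-j) z_k^(j), where zk j = z_k^(j).
  (Note: the argument i of Ssum corresponds to the index i-1 in S_{k,i-1}.)\<close>
definition Ssum :: "(nat \<Rightarrow> real) \<Rightarrow> nat \<Rightarrow> real" where
  "Ssum zk i = (1/2) * (\<Sum>j=1..i-1. real (i choose j) * zk (i - j) * zk j)"

text \<open>\<Omega>_f(t,x,z~): k-th entry S_{k,\<rho>_k-1} + L_f^\<rho>_k \<phi>_k(t,x); z k j = z_k^(j).\<close>
definition Omega_f :: "real \<Rightarrow> (real \<Rightarrow> real^'n \<Rightarrow> real^'n) \<Rightarrow> (real \<Rightarrow> real^'n \<Rightarrow> real^'r)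
     \<Rightarrow> ('r \<Rightarrow> nat) \<Rightarrow> real \<Rightarrow> real^'n \<Rightarrow> ('r \<Rightarrow> nat \<Rightarrow> real) \<Rightarrow> real^'r" where
  "Omega_f t0 f \<phi> \<rho> t x z = (\<chi> k. Ssum (z k) (\<rho> k) + Lf_pow t0 f (\<rho> k) (comp \<phi> k) t x)"

definition Dz :: "('r \<Rightarrow> nat \<Rightarrow> real) \<Rightarrow> real^'r \<Rightarrow> real^'r" where
  "Dz z w = (\<chi> k. z k 0 * w $ k)"

definition feedback :: "real \<Rightarrow> (real \<Rightarrow> real^'n \<Rightarrow> real^'n) \<Rightarrow> (real \<Rightarrow> real^'n \<Rightarrow> real^'m^'n)
     \<Rightarrow> (real \<Rightarrow> real^'n \<Rightarrow> real^'m) \<Rightarrow> ('m \<Rightarrow> nat) \<Rightarrow> real \<Rightarrow> real^'n \<Rightarrow> ('m \<Rightarrow> nat \<Rightarrow> real)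
     \<Rightarrow> real^'m \<Rightarrow> real^'m" where
  "feedback t0 f g \<phi> \<rho> t x z w =
     - (matrix_inv (Omega_g t0 f g \<phi> \<rho> t x) *v (Omega_f t0 f \<phi> \<rho> t x z + Dz z w))"

end

theory Submission
  imports Defs
begin

(* Fix a component k and let e_j (defect ... k j below), for j < rho_k, be the j-th time
   derivative of phi_k(t, x(t)) + z_k(t)^2/2 computed formally along the augmented dynamics;
   by the Leibniz rule it is L_f^j phi_k(t, x(t)) + 1/2 sum_i (j choose i) z_k^(j-i) z_k^(i).
   The initial conditions for z say exactly that e_j(t0) = 0.  Along a solution the chain rule
   gives e_j' = e_(j+1) for j + 1 < rho_k, since L_g L_f^j phi_k vanishes below the relative
   degree, and e_(rho_k - 1)' = 0, since the feedback u cancels the entry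
   S_(k, rho_k - 1) + L_f^rho_k phi_k + z_k w_k.  These identities hold almost everywhere and
   every e_j is absolutely continuous, so by downward induction all e_j vanish on [t0, T]; for
   j = 0 this is phi_k(t, x(t)) = - z_k(t)^2/2 <= 0. *)

definition nonoverlapping_intervals_in :: "real set \<Rightarrow> (real \<times> real) set \<Rightarrow> bool" where
  "nonoverlapping_intervals_in S D \<longleftrightarrow> finite D \<and> (\<forall>(u,v)\<in>D. u \<le> v \<and> {u..v} \<subseteq> S)
     \<and> disjoint_family_on (\<lambda>(u,v). {u<..<v}) D"

lemma absolutely_continuous_on_iff:
  "absolutely_continuous_on S h \<longleftrightarrow>
     (\<forall>\<epsilon>>0. \<exists>\<delta>>0. \<forall>D. nonoverlapping_intervals_in S D \<and> (\<Sum>(u,v)\<in>D. v - u) < \<delta>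
        \<longrightarrow> (\<Sum>(u,v)\<in>D. norm (h v - h u)) < \<epsilon>)"
  unfolding absolutely_continuous_on_def nonoverlapping_intervals_in_def by meson

lemma absolutely_continuous_onE:
  assumes "absolutely_continuous_on S h" "\<epsilon> > 0"
  obtains \<delta> where "\<delta> > 0" "\<And>D. nonoverlapping_intervals_in S D \<Longrightarrow> (\<Sum>(u,v)\<in>D. v - u) < \<delta>
     \<Longrightarrow> (\<Sum>(u,v)\<in>D. norm (h v - h u)) < \<epsilon>"
  using assms unfolding absolutely_continuous_on_iff by meson

lemma absolutely_continuous_on_dominated:
  fixes h1 :: "real \<Rightarrow> 'a::real_normed_vector" and h2 :: "real \<Rightarrow> 'b::real_normed_vector"
    and k :: "real \<Rightarrow> 'c::real_normed_vector"
  assumes h1: "absolutely_continuous_on S h1" and h2: "absolutely_continuous_on S h2"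
    and dominated: "\<And>u v. u \<in> S \<Longrightarrow> v \<in> S \<Longrightarrow> u \<le> v \<Longrightarrow>
       norm (k v - k u) \<le> B * (norm (h1 v - h1 u) + norm (h2 v - h2 u))"
  shows "absolutely_continuous_on S k"
  unfolding absolutely_continuous_on_iff
proof (intro allI impI)
  fix \<epsilon> :: real assume "\<epsilon> > 0"
  define C where "C = \<bar>B\<bar> + 1"
  have "C > 0" "B \<le> C" by (auto simp: C_def)
  with \<open>\<epsilon> > 0\<close> have "\<epsilon> / (2 * C) > 0" by simp
  from absolutely_continuous_onE[OF h1 this] absolutely_continuous_onE[OF h2 this]
  obtain \<delta>1 \<delta>2 where "\<delta>1 > 0" "\<delta>2 > 0"
    and \<delta>1: "\<And>D. nonoverlapping_intervals_in S D \<Longrightarrow> (\<Sum>(u,v)\<in>D. v - u) < \<delta>1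
       \<Longrightarrow> (\<Sum>(u,v)\<in>D. norm (h1 v - h1 u)) < \<epsilon> / (2 * C)"
    and \<delta>2: "\<And>D. nonoverlapping_intervals_in S D \<Longrightarrow> (\<Sum>(u,v)\<in>D. v - u) < \<delta>2
       \<Longrightarrow> (\<Sum>(u,v)\<in>D. norm (h2 v - h2 u)) < \<epsilon> / (2 * C)"
    by metis
  show "\<exists>\<delta>>0. \<forall>D. nonoverlapping_intervals_in S D \<and> (\<Sum>(u,v)\<in>D. v - u) < \<delta>
     \<longrightarrow> (\<Sum>(u,v)\<in>D. norm (k v - k u)) < \<epsilon>"
  proof (intro exI[of _ "min \<delta>1 \<delta>2"] conjI allI impI)
    fix D assume D: "nonoverlapping_intervals_in S D \<and> (\<Sum>(u,v)\<in>D. v - u) < min \<delta>1 \<delta>2"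
    have "(\<Sum>(u,v)\<in>D. norm (k v - k u)) \<le> (\<Sum>(u,v)\<in>D. C * (norm (h1 v - h1 u) + norm (h2 v - h2 u)))"
    proof (intro sum_mono, clarify)
      fix u v assume "(u, v) \<in> D"
      then have "u \<le> v" "{u..v} \<subseteq> S" using D by (auto simp: nonoverlapping_intervals_in_def)
      then have "u \<le> v" "u \<in> S" "v \<in> S" by auto
      then show "norm (k v - k u) \<le> C * (norm (h1 v - h1 u) + norm (h2 v - h2 u))"
        using dominated[of u v]
          mult_right_mono[OF \<open>B \<le> C\<close>, of "norm (h1 v - h1 u) + norm (h2 v - h2 u)"]
        by simp
    qed
    also have "\<dots> = C * ((\<Sum>(u,v)\<in>D. norm (h1 v - h1 u)) + (\<Sum>(u,v)\<in>D. norm (h2 v - h2 u)))"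
      by (simp add: sum_distrib_left sum.distrib case_prod_beta distrib_left)
    also have "\<dots> < C * (\<epsilon> / (2 * C) + \<epsilon> / (2 * C))"
      using \<delta>1[of D] \<delta>2[of D] D \<open>C > 0\<close> by (intro mult_strict_left_mono add_strict_mono) auto
    also have "\<dots> = \<epsilon>" using \<open>C > 0\<close> by (simp add: field_simps)
    finally show "(\<Sum>(u,v)\<in>D. norm (k v - k u)) < \<epsilon>" .
  qed (use \<open>\<delta>1 > 0\<close> \<open>\<delta>2 > 0\<close> in simp)
qed

lemma absolutely_continuous_on_id: "absolutely_continuous_on S (\<lambda>t. t)"
  unfolding absolutely_continuous_on_iff
proof (intro allI impI exI conjI)
  fix \<epsilon> :: real and D assume "\<epsilon> > 0"
    and D: "nonoverlapping_intervals_in S D \<and> (\<Sum>(u,v)\<in>D. v - u) < \<epsilon>"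
  then have "(\<Sum>(u,v)\<in>D. norm (v - u)) = (\<Sum>(u,v)\<in>D. v - u)"
    by (intro sum.cong) (auto simp: nonoverlapping_intervals_in_def)
  with D show "(\<Sum>(u,v)\<in>D. norm (v - u)) < \<epsilon>" by simp
qed

lemma absolutely_continuous_on_const: "absolutely_continuous_on S (\<lambda>t. c)"
  by (rule absolutely_continuous_on_dominated[where B = 0,
        OF absolutely_continuous_on_id absolutely_continuous_on_id]) simp

lemma absolutely_continuous_on_add:
  fixes h1 h2 :: "real \<Rightarrow> 'a::real_normed_vector"
  assumes "absolutely_continuous_on S h1" "absolutely_continuous_on S h2"
  shows "absolutely_continuous_on S (\<lambda>t. h1 t + h2 t)"
proof (rule absolutely_continuous_on_dominated[OF assms, where B = 1])
  fix u v
  show "norm (h1 v + h2 v - (h1 u + h2 u)) \<le> 1 * (norm (h1 v - h1 u) + norm (h2 v - h2 u))"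
    using norm_triangle_ineq[of "h1 v - h1 u" "h2 v - h2 u"] by (simp add: algebra_simps)
qed

lemma absolutely_continuous_on_sum:
  fixes h :: "'i \<Rightarrow> real \<Rightarrow> 'a::real_normed_vector"
  shows "finite I \<Longrightarrow> (\<And>i. i \<in> I \<Longrightarrow> absolutely_continuous_on S (h i))
    \<Longrightarrow> absolutely_continuous_on S (\<lambda>t. \<Sum>i\<in>I. h i t)"
  by (induction I rule: finite_induct)
    (auto intro: absolutely_continuous_on_add absolutely_continuous_on_const)

lemma absolutely_continuous_on_Pair:
  fixes h1 :: "real \<Rightarrow> 'a::real_normed_vector" and h2 :: "real \<Rightarrow> 'b::real_normed_vector"
  assumes "absolutely_continuous_on S h1" "absolutely_continuous_on S h2"
  shows "absolutely_continuous_on S (\<lambda>t. (h1 t, h2 t))"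
  by (rule absolutely_continuous_on_dominated[OF assms, where B = 1])
    (simp add: norm_Pair_le)

lemma nonoverlapping_intervals_in_mono:
  "nonoverlapping_intervals_in T D \<Longrightarrow> T \<subseteq> S \<Longrightarrow> nonoverlapping_intervals_in S D"
  unfolding nonoverlapping_intervals_in_def by fast

lemma absolutely_continuous_on_subset:
  "absolutely_continuous_on S h \<Longrightarrow> T \<subseteq> S \<Longrightarrow> absolutely_continuous_on T h"
  unfolding absolutely_continuous_on_iff by (meson nonoverlapping_intervals_in_mono)

lemma absolutely_continuous_on_imp_continuous_on:
  fixes h :: "real \<Rightarrow> 'a::real_normed_vector"
  assumes "absolutely_continuous_on {a..b} h"
  shows "continuous_on {a..b} h"
  unfolding continuous_on_iff
proof (intro ballI allI impI)
  fix t \<epsilon> :: real assume t: "t \<in> {a..b}" and "\<epsilon> > 0"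
  obtain \<delta> where "\<delta> > 0" and \<delta>: "\<And>D. nonoverlapping_intervals_in {a..b} D
     \<Longrightarrow> (\<Sum>(u,v)\<in>D. v - u) < \<delta> \<Longrightarrow> (\<Sum>(u,v)\<in>D. norm (h v - h u)) < \<epsilon>"
    using absolutely_continuous_onE[OF assms \<open>\<epsilon> > 0\<close>] by blast
  show "\<exists>\<delta>>0. \<forall>s\<in>{a..b}. dist s t < \<delta> \<longrightarrow> dist (h s) (h t) < \<epsilon>"
  proof (intro exI[of _ \<delta>] conjI ballI impI)
    fix s assume s: "s \<in> {a..b}" "dist s t < \<delta>"
    have "nonoverlapping_intervals_in {a..b} {(min s t, max s t)}"
      using s t by (auto simp: nonoverlapping_intervals_in_def disjoint_family_on_def)
    moreover have "max s t - min s t < \<delta>" using s by (auto simp: dist_real_def)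
    ultimately have "norm (h (max s t) - h (min s t)) < \<epsilon>" using \<delta> by fastforce
    then show "dist (h s) (h t) < \<epsilon>"
      by (cases "s \<le> t") (auto simp: dist_norm norm_minus_commute max_def min_def)
  qed (fact \<open>\<delta> > 0\<close>)
qed

lemma absolutely_continuous_on_mult:
  fixes h1 h2 :: "real \<Rightarrow> 'a::real_normed_algebra"
  assumes h1: "absolutely_continuous_on {a..b} h1" and h2: "absolutely_continuous_on {a..b} h2"
  shows "absolutely_continuous_on {a..b} (\<lambda>t. h1 t * h2 t)"
proof -
  have "bounded (h1 ` {a..b})" "bounded (h2 ` {a..b})"
    using h1 h2 by (meson absolutely_continuous_on_imp_continuous_on compact_Icc
        compact_continuous_image compact_imp_bounded)+
  then obtain M where M: "\<And>t. t \<in> {a..b} \<Longrightarrow> norm (h1 t) \<le> M \<and> norm (h2 t) \<le> M"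
    unfolding bounded_iff by (meson imageI order.trans max.cobounded1 max.cobounded2)
  show ?thesis
  proof (rule absolutely_continuous_on_dominated[OF h1 h2, where B = M])
    fix u v assume uv: "u \<in> {a..b}" "v \<in> {a..b}"
    have "h1 v * h2 v - h1 u * h2 u = (h1 v - h1 u) * h2 v + h1 u * (h2 v - h2 u)"
      by (simp add: algebra_simps)
    then have "norm (h1 v * h2 v - h1 u * h2 u)
        \<le> norm (h1 v - h1 u) * norm (h2 v) + norm (h1 u) * norm (h2 v - h2 u)"
      by (metis norm_mult_ineq norm_triangle_le add_mono)
    also have "\<dots> \<le> norm (h1 v - h1 u) * M + M * norm (h2 v - h2 u)"
      using M uv by (intro add_mono mult_left_mono mult_right_mono) auto
    finally show "norm (h1 v * h2 v - h1 u * h2 u) \<le> M * (norm (h1 v - h1 u) + norm (h2 v - h2 u))"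
      by (simp add: algebra_simps)
  qed
qed

lemma absolutely_continuous_on_lipschitz_compose:
  fixes \<gamma> :: "real \<Rightarrow> 'a::real_normed_vector" and H :: "'a \<Rightarrow> 'b::real_normed_vector"
  assumes \<gamma>: "absolutely_continuous_on S \<gamma>" and H: "B-lipschitz_on K H" and "\<gamma> ` S \<subseteq> K"
  shows "absolutely_continuous_on S (\<lambda>t. H (\<gamma> t))"
proof (rule absolutely_continuous_on_dominated[OF \<gamma> \<gamma>, where B = B])
  fix u v assume "u \<in> S" "v \<in> S"
  then have "norm (H (\<gamma> v) - H (\<gamma> u)) \<le> B * norm (\<gamma> v - \<gamma> u)"
    using lipschitz_on_normD[OF H] \<open>\<gamma> ` S \<subseteq> K\<close> by blast
  also have "\<dots> \<le> B * (norm (\<gamma> v - \<gamma> u) + norm (\<gamma> v - \<gamma> u))"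
    using lipschitz_on_nonneg[OF H] by (simp add: mult_left_mono)
  finally show "norm (H (\<gamma> v) - H (\<gamma> u)) \<le> B * (norm (\<gamma> v - \<gamma> u) + norm (\<gamma> v - \<gamma> u))" .
qed

lemma tagged_division_of_real_intervalD:
  fixes a b :: real
  assumes "\<D> tagged_division_of {a..b}" "(x, K) \<in> \<D>"
  shows "K = {Inf K..Sup K}" "a \<le> Inf K" "Inf K \<le> x" "x \<le> Sup K" "Sup K \<le> b"
proof -
  obtain u v where K: "K = {u..v}" "x \<in> K" "K \<subseteq> {a..b}"
    using tagged_division_ofD(2-4)[OF assms] by (metis box_real(2))
  then have "u \<le> v" "Inf K = u" "Sup K = v" by auto
  with K show "K = {Inf K..Sup K}" "a \<le> Inf K" "Inf K \<le> x" "x \<le> Sup K" "Sup K \<le> b"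
    by auto
qed

lemma tagged_division_endpoints_degenerate:
  fixes a b :: real
  assumes "\<D> tagged_division_of {a..b}" "(x, K) \<in> \<D>" "(y, L) \<in> \<D>" "(x, K) \<noteq> (y, L)"
    and "Inf K = Inf L" "Sup K = Sup L"
  shows "Sup K = Inf K"
proof -
  note K = tagged_division_of_real_intervalD[OF assms(1,2)]
  have "K = L" using K(1) tagged_division_of_real_intervalD(1)[OF assms(1,3)] assms(5,6) by simp
  then have "interior K = {}" using tagged_division_ofD(5)[OF assms(1-4)] by simp
  then have "\<not> Inf K < Sup K" using K(1) interior_atLeastAtMost_real[of "Inf K" "Sup K"] by auto
  moreover have "Inf K \<le> Sup K" using K(3,4) by (rule order_trans)
  ultimately show ?thesis by linarith
qed

lemma sum_tagged_division_endpoints: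
  fixes a b :: real and F :: "real \<Rightarrow> real \<Rightarrow> 'b::comm_monoid_add"
  assumes "\<D> tagged_division_of {a..b}" "\<D>' \<subseteq> \<D>" "\<And>u. F u u = 0"
  shows "(\<Sum>(u,v)\<in>(\<lambda>(x,K). (Inf K, Sup K)) ` \<D>'. F u v) = (\<Sum>(x,K)\<in>\<D>'. F (Inf K) (Sup K))"
proof -
  have "finite \<D>'" using assms(1,2) finite_subset tagged_division_of_finite by blast
  then have "(\<Sum>(u,v)\<in>(\<lambda>(x,K). (Inf K, Sup K)) ` \<D>'. F u v)
      = (\<Sum>p\<in>\<D>'. (\<lambda>(u,v). F u v) ((\<lambda>(x,K). (Inf K, Sup K)) p))"
  proof (rule sum.reindex_nontrivial[unfolded o_def])
    fix p q assume "p \<in> \<D>'" "q \<in> \<D>'" "p \<noteq> q"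
      and "(\<lambda>(x,K). (Inf K, Sup K)) p = (\<lambda>(x,K). (Inf K, Sup K)) q"
    moreover obtain x K y L where "p = (x, K)" "q = (y, L)" by (cases p, cases q) blast
    ultimately have "Sup K = Inf K"
      using tagged_division_endpoints_degenerate[OF assms(1), of x K y L] \<open>\<D>' \<subseteq> \<D>\<close> by auto
    then show "(\<lambda>(u,v). F u v) ((\<lambda>(x,K). (Inf K, Sup K)) p) = 0"
      using \<open>p = (x, K)\<close> assms(3) by simp
  qed
  then show ?thesis by (simp add: case_prod_beta)
qed

lemma nonoverlapping_intervals_in_tagged_division_endpoints:
  fixes a b :: real
  assumes \<D>: "\<D> tagged_division_of {a..b}" and "\<D>' \<subseteq> \<D>"
  shows "nonoverlapping_intervals_in {a..b} ((\<lambda>(x,K). (Inf K, Sup K)) ` \<D>')"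
  unfolding nonoverlapping_intervals_in_def disjoint_family_on_def
proof (intro conjI ballI impI)
  show "finite ((\<lambda>(x,K). (Inf K, Sup K)) ` \<D>')"
    using \<D> \<open>\<D>' \<subseteq> \<D>\<close> finite_subset tagged_division_of_finite by blast
next
  fix d assume "d \<in> (\<lambda>(x,K). (Inf K, Sup K)) ` \<D>'"
  then obtain x K where "(x, K) \<in> \<D>'" "d = (Inf K, Sup K)" by auto
  then show "case d of (u, v) \<Rightarrow> u \<le> v \<and> {u..v} \<subseteq> {a..b}"
    using tagged_division_of_real_intervalD[OF \<D>, of x K] \<open>\<D>' \<subseteq> \<D>\<close> by auto
next
  fix d d' assume "d \<in> (\<lambda>(x,K). (Inf K, Sup K)) ` \<D>'" "d' \<in> (\<lambda>(x,K). (Inf K, Sup K)) ` \<D>'" "d \<noteq> d'"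
  then obtain x K y L where xK: "(x, K) \<in> \<D>'" "d = (Inf K, Sup K)"
    and yL: "(y, L) \<in> \<D>'" "d' = (Inf L, Sup L)"
    by auto
  then have "interior K \<inter> interior L = {}"
    using tagged_division_ofD(5)[OF \<D>, of x K y L] \<open>d \<noteq> d'\<close> \<open>\<D>' \<subseteq> \<D>\<close> by auto
  moreover have "interior K = {Inf K<..<Sup K}" "interior L = {Inf L<..<Sup L}"
    using tagged_division_of_real_intervalD(1)[OF \<D>] xK(1) yL(1) \<open>\<D>' \<subseteq> \<D>\<close>
    by (metis interior_atLeastAtMost_real subsetD)+
  ultimately show "(case d of (u, v) \<Rightarrow> {u<..<v}) \<inter> (case d' of (u, v) \<Rightarrow> {u<..<v}) = {}"
    using xK(2) yL(2) by simp
qed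

lemma absolutely_continuous_on_tagged_division_small:
  fixes e :: "real \<Rightarrow> 'a::real_normed_vector"
  assumes "absolutely_continuous_on {a..b} e" "\<epsilon> > 0"
  obtains \<delta> where "\<delta> > 0"
    "\<And>\<D> \<D>'. \<D> tagged_division_of {a..b} \<Longrightarrow> \<D>' \<subseteq> \<D> \<Longrightarrow> (\<Sum>(x,K)\<in>\<D>'. Sup K - Inf K) < \<delta>
       \<Longrightarrow> (\<Sum>(x,K)\<in>\<D>'. norm (e (Sup K) - e (Inf K))) < \<epsilon>"
proof -
  obtain \<delta> where "\<delta> > 0" and \<delta>: "\<And>D. nonoverlapping_intervals_in {a..b} D
     \<Longrightarrow> (\<Sum>(u,v)\<in>D. v - u) < \<delta> \<Longrightarrow> (\<Sum>(u,v)\<in>D. norm (e v - e u)) < \<epsilon>"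
    using absolutely_continuous_onE[OF assms] by blast
  show thesis
  proof (rule that[OF \<open>\<delta> > 0\<close>])
    fix \<D> \<D>' assume \<D>: "\<D> tagged_division_of {a..b}" and "\<D>' \<subseteq> \<D>"
      and "(\<Sum>(x,K)\<in>\<D>'. Sup K - Inf K) < \<delta>"
    then have "(\<Sum>(u,v)\<in>(\<lambda>(x,K). (Inf K, Sup K)) ` \<D>'. norm (e v - e u)) < \<epsilon>"
      using nonoverlapping_intervals_in_tagged_division_endpoints
        sum_tagged_division_endpoints[of _ _ _ _ "\<lambda>u v. v - u"]
      by (intro \<delta>) auto
    then show "(\<Sum>(x,K)\<in>\<D>'. norm (e (Sup K) - e (Inf K))) < \<epsilon>"
      using sum_tagged_division_endpoints[OF \<D> \<open>\<D>' \<subseteq> \<D>\<close>, of "\<lambda>u v. norm (e v - e u)"] by simp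
  qed
qed

lemma norm_sum_tagged_division_le:
  fixes e :: "real \<Rightarrow> 'a::real_normed_vector" and a b :: real
  assumes "a \<le> b" and \<D>: "\<D> tagged_division_of {a..b}" and "\<D>' \<subseteq> \<D>" "\<epsilon> \<ge> 0"
    and local: "\<And>x K s. (x, K) \<in> \<D>' \<Longrightarrow> s \<in> K \<Longrightarrow> norm (e s - e x) \<le> \<epsilon> * \<bar>s - x\<bar>"
  shows "norm (\<Sum>(x,K)\<in>\<D>'. e (Sup K) - e (Inf K)) \<le> \<epsilon> * (b - a)"
proof -
  note K = tagged_division_of_real_intervalD[OF \<D>]
  have Inf_le_Sup: "Inf K \<le> Sup K" if "(x, K) \<in> \<D>" for x K
    using K(3,4)[OF that] by (rule order_trans)
  have "norm (e (Sup K) - e (Inf K)) \<le> \<epsilon> * (Sup K - Inf K)" if "(x, K) \<in> \<D>'" for x K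
  proof -
    have "(x, K) \<in> \<D>" using that \<open>\<D>' \<subseteq> \<D>\<close> by blast
    then have "Inf K \<in> K" "Sup K \<in> K" "Inf K \<le> x" "x \<le> Sup K"
      using K Inf_le_Sup by (metis atLeastAtMost_iff order.refl)+
    then have "norm (e (Sup K) - e x) \<le> \<epsilon> * (Sup K - x)" "norm (e (Inf K) - e x) \<le> \<epsilon> * (x - Inf K)"
      using local[OF that, of "Sup K"] local[OF that, of "Inf K"] by auto
    then show ?thesis
      using norm_triangle_ineq4[of "e (Sup K) - e x" "e (Inf K) - e x"] by (simp add: algebra_simps)
  qed
  then have "norm (\<Sum>(x,K)\<in>\<D>'. e (Sup K) - e (Inf K)) \<le> (\<Sum>(x,K)\<in>\<D>'. \<epsilon> * (Sup K - Inf K))"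
    by (intro order_trans[OF norm_sum] sum_mono) auto
  also have "\<dots> \<le> (\<Sum>(x,K)\<in>\<D>. \<epsilon> * (Sup K - Inf K))"
    using \<D> \<open>\<D>' \<subseteq> \<D>\<close> Inf_le_Sup \<open>\<epsilon> \<ge> 0\<close> by (intro sum_mono2) auto
  also have "\<dots> = \<epsilon> * (b - a)"
    using additive_tagged_division_1[OF \<open>a \<le> b\<close> \<D>, of "\<lambda>t. t"]
    by (simp add: sum_distrib_left[symmetric] case_prod_beta)
  finally show ?thesis .
qed

lemma negligible_tagged_division_small:
  fixes a b :: real
  assumes "negligible N" "\<delta> > 0"
  obtains \<gamma> where "gauge \<gamma>"
    "\<And>\<D>. \<D> tagged_division_of {a..b} \<Longrightarrow> \<gamma> fine \<D> \<Longrightarrow>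
       (\<Sum>(x,K)\<in>{p \<in> \<D>. fst p \<in> N}. Sup K - Inf K) < \<delta>"
proof -
  have "(indicator N has_integral (0::real)) (cbox a b)"
    using \<open>negligible N\<close> unfolding negligible_def by blast
  then obtain \<gamma> where "gauge \<gamma>" and \<gamma>: "\<And>\<D>. \<D> tagged_division_of cbox a b \<Longrightarrow> \<gamma> fine \<D> \<Longrightarrow>
      norm ((\<Sum>(x,K)\<in>\<D>. measure lborel K *\<^sub>R (indicator N x :: real)) - 0) < \<delta>"
    using has_integral[THEN iffD1, rule_format, OF _ \<open>\<delta> > 0\<close>] by metis
  show thesis
  proof (rule that[OF \<open>gauge \<gamma>\<close>])
    fix \<D> assume \<D>: "\<D> tagged_division_of {a..b}" and "\<gamma> fine \<D>"
    note K = tagged_division_of_real_intervalD[OF \<D>]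
    have "measure lborel K = Sup K - Inf K" if "(x, K) \<in> \<D>" for x K
      using K(1,3,4)[OF that] by (metis content_real order_trans)
    then have "(\<Sum>(x,K)\<in>{p \<in> \<D>. fst p \<in> N}. Sup K - Inf K)
        = (\<Sum>(x,K)\<in>\<D>. measure lborel K *\<^sub>R (indicator N x :: real))"
      using \<D> by (subst sum.inter_filter) (auto simp: indicator_def intro!: sum.cong)
    also have "\<dots> < \<delta>" using \<gamma>[of \<D>] \<D> \<open>\<gamma> fine \<D>\<close> by simp
    finally show "(\<Sum>(x,K)\<in>{p \<in> \<D>. fst p \<in> N}. Sup K - Inf K) < \<delta>" .
  qed
qed

lemma has_vector_derivative_zero_gauge:
  fixes e :: "real \<Rightarrow> 'a::real_normed_vector"
  assumes deriv: "\<And>t. t \<in> A \<Longrightarrow> (e has_vector_derivative 0) (at t within S)" and "\<epsilon> > 0"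
  obtains \<gamma> where "gauge \<gamma>"
    "\<And>t s. t \<in> A \<Longrightarrow> s \<in> S \<Longrightarrow> s \<in> \<gamma> t \<Longrightarrow> norm (e s - e t) \<le> \<epsilon> * \<bar>s - t\<bar>"
proof -
  have "\<exists>r>0. \<forall>s\<in>S. \<bar>s - t\<bar> < r \<longrightarrow> norm (e s - e t) \<le> \<epsilon> * \<bar>s - t\<bar>" if "t \<in> A" for t
    using deriv[OF that] \<open>\<epsilon> > 0\<close>
    unfolding has_vector_derivative_def has_derivative_within_alt by auto
  then obtain r where r: "\<And>t. t \<in> A \<Longrightarrow> r t > 0"
    and local: "\<And>t s. t \<in> A \<Longrightarrow> s \<in> S \<Longrightarrow> \<bar>s - t\<bar> < r t \<Longrightarrow> norm (e s - e t) \<le> \<epsilon> * \<bar>s - t\<bar>"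
    by metis
  define \<gamma> where "\<gamma> t = (if t \<in> A then ball t (r t) else UNIV)" for t
  have "gauge \<gamma>" unfolding gauge_def \<gamma>_def using r by auto
  moreover have "norm (e s - e t) \<le> \<epsilon> * \<bar>s - t\<bar>" if "t \<in> A" "s \<in> S" "s \<in> \<gamma> t" for t s
    using local[OF that(1,2)] that by (simp add: \<gamma>_def dist_real_def abs_minus_commute)
  ultimately show thesis using that by blast
qed

(* Cells of a fine tagged division whose tag lies in N have small total length and are controlled
   by absolute continuity; on every other cell e moves by at most \<epsilon> times the cell length. *)
lemma absolutely_continuous_on_derivative_zero_bound:
  fixes e :: "real \<Rightarrow> 'a::real_normed_vector"
  assumes "a \<le> b" and ac: "absolutely_continuous_on {a..b} e" and "negligible N"
    and deriv: "\<And>t. t \<in> {a..b} - N \<Longrightarrow> (e has_vector_derivative 0) (at t within {a..b})"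
    and "\<epsilon> > 0"
  shows "norm (e b - e a) \<le> \<epsilon> * (b - a) + \<epsilon>"
proof -
  obtain \<delta> where "\<delta> > 0" and \<delta>: "\<And>\<D> \<D>'. \<D> tagged_division_of {a..b} \<Longrightarrow> \<D>' \<subseteq> \<D>
      \<Longrightarrow> (\<Sum>(x,K)\<in>\<D>'. Sup K - Inf K) < \<delta> \<Longrightarrow> (\<Sum>(x,K)\<in>\<D>'. norm (e (Sup K) - e (Inf K))) < \<epsilon>"
    using absolutely_continuous_on_tagged_division_small[OF ac \<open>\<epsilon> > 0\<close>] by blast
  obtain \<gamma>N where "gauge \<gamma>N" and \<gamma>N: "\<And>\<D>. \<D> tagged_division_of {a..b} \<Longrightarrow> \<gamma>N fine \<D> \<Longrightarrow>
      (\<Sum>(x,K)\<in>{p \<in> \<D>. fst p \<in> N}. Sup K - Inf K) < \<delta>"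
    using negligible_tagged_division_small[OF \<open>negligible N\<close> \<open>\<delta> > 0\<close>] by blast
  obtain \<gamma>E where "gauge \<gamma>E" and \<gamma>E: "\<And>t s. t \<in> {a..b} - N \<Longrightarrow> s \<in> {a..b} \<Longrightarrow>
      s \<in> \<gamma>E t \<Longrightarrow> norm (e s - e t) \<le> \<epsilon> * \<bar>s - t\<bar>"
    using has_vector_derivative_zero_gauge[OF deriv \<open>\<epsilon> > 0\<close>] by blast
  obtain \<D> where \<D>: "\<D> tagged_division_of {a..b}" and fine: "(\<lambda>t. \<gamma>N t \<inter> \<gamma>E t) fine \<D>"
    using fine_division_exists_real[OF gauge_Int[OF \<open>gauge \<gamma>N\<close> \<open>gauge \<gamma>E\<close>]] by blast
  define \<D>N where "\<D>N = {p \<in> \<D>. fst p \<in> N}"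
  define \<D>E where "\<D>E = {p \<in> \<D>. fst p \<notin> N}"
  have "finite \<D>" using \<D> by blast
  have "\<D> = \<D>N \<union> \<D>E" "\<D>N \<inter> \<D>E = {}" "\<D>N \<subseteq> \<D>" "\<D>E \<subseteq> \<D>"
    unfolding \<D>N_def \<D>E_def by auto
  have "(\<Sum>(x,K)\<in>\<D>N. Sup K - Inf K) < \<delta>" using \<gamma>N[OF \<D>] fine unfolding \<D>N_def by (simp add: fine_Int)
  then have "norm (\<Sum>(x,K)\<in>\<D>N. e (Sup K) - e (Inf K)) < \<epsilon>"
    using \<delta>[OF \<D> \<open>\<D>N \<subseteq> \<D>\<close>] by (smt (verit) norm_sum case_prod_beta sum.cong)
  moreover have "norm (\<Sum>(x,K)\<in>\<D>E. e (Sup K) - e (Inf K)) \<le> \<epsilon> * (b - a)"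
  proof (rule norm_sum_tagged_division_le[OF \<open>a \<le> b\<close> \<D> \<open>\<D>E \<subseteq> \<D>\<close>])
    fix x K s assume "(x, K) \<in> \<D>E" "s \<in> K"
    then have xK: "(x, K) \<in> \<D>" "x \<notin> N" unfolding \<D>E_def by auto
    then have "x \<in> {a..b} - N" "s \<in> {a..b}"
      using tagged_division_ofD(2,3)[OF \<D> xK(1)] \<open>s \<in> K\<close> by auto
    moreover have "s \<in> \<gamma>E x" using fine xK(1) \<open>s \<in> K\<close> unfolding fine_def by blast
    ultimately show "norm (e s - e x) \<le> \<epsilon> * \<bar>s - x\<bar>" by (rule \<gamma>E)
  qed (use \<open>\<epsilon> > 0\<close> in simp)
  moreover have "e b - e a
      = (\<Sum>(x,K)\<in>\<D>N. e (Sup K) - e (Inf K)) + (\<Sum>(x,K)\<in>\<D>E. e (Sup K) - e (Inf K))"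
    using additive_tagged_division_1[OF \<open>a \<le> b\<close> \<D>, of e] \<open>finite \<D>\<close>
      \<open>\<D> = \<D>N \<union> \<D>E\<close> \<open>\<D>N \<inter> \<D>E = {}\<close> by (metis finite_Un sum.union_disjoint)
  ultimately show ?thesis by (smt (verit) norm_triangle_ineq)
qed
lemma AE_lebesgue_negligibleE:
  assumes "AE t in lebesgue. P t"
  obtains N where "negligible N" "\<And>t. t \<notin> N \<Longrightarrow> P t"
proof -
  from assms obtain N where N: "{t \<in> space lebesgue. \<not> P t} \<subseteq> N"
    and "emeasure lebesgue N = 0" "N \<in> sets lebesgue"
    by (rule AE_E)
  then have "negligible N" using negligible_iff_null_sets null_setsI by blast
  with N show thesis using that by auto
qed

lemma absolutely_continuous_on_derivative_zero_ae:
  fixes e :: "real \<Rightarrow> 'a::real_normed_vector"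
  assumes "a \<le> b" and ac: "absolutely_continuous_on {a..b} e"
    and "AE t in lebesgue. t \<in> {a..b} \<longrightarrow> (e has_vector_derivative 0) (at t within {a..b})"
  shows "e b = e a"
proof -
  obtain N where "negligible N"
    and "\<And>t. t \<notin> N \<Longrightarrow> t \<in> {a..b} \<longrightarrow> (e has_vector_derivative 0) (at t within {a..b})"
    using AE_lebesgue_negligibleE[OF assms(3)] by metis
  then have zero_deriv: "\<And>t. t \<in> {a..b} - N \<Longrightarrow> (e has_vector_derivative 0) (at t within {a..b})"
    by blast
  have bound: "norm (e b - e a) \<le> \<epsilon> * (b - a) + \<epsilon>" if "\<epsilon> > 0" for \<epsilon>
    by (rule absolutely_continuous_on_derivative_zero_bound[OF \<open>a \<le> b\<close> ac \<open>negligible N\<close>])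
      (use zero_deriv that in auto)
  have "norm (e b - e a) \<le> 0"
  proof (rule field_le_epsilon)
    fix \<epsilon> :: real assume "\<epsilon> > 0"
    then have "\<epsilon> / (b - a + 1) > 0" using \<open>a \<le> b\<close> by simp
    have "\<epsilon> / (b - a + 1) * (b - a) + \<epsilon> / (b - a + 1) = \<epsilon> / (b - a + 1) * (b - a + 1)"
      by (simp only: distrib_left mult_1_right)
    also have "\<dots> = \<epsilon>" using \<open>a \<le> b\<close> by simp
    finally show "norm (e b - e a) \<le> 0 + \<epsilon>" using bound[OF \<open>\<epsilon> / (b - a + 1) > 0\<close>] by simp
  qed
  then show ?thesis by simp
qed

lemma absolutely_continuous_on_derivative_zero_ae_const:
  fixes e :: "real \<Rightarrow> 'a::real_normed_vector"
  assumes ac: "absolutely_continuous_on {a..b} e"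
    and deriv: "AE s in lebesgue. s \<in> {a..b} \<longrightarrow> (e has_vector_derivative 0) (at s within {a..b})"
    and "t \<in> {a..b}"
  shows "e t = e a"
proof (rule absolutely_continuous_on_derivative_zero_ae)
  show "a \<le> t" "absolutely_continuous_on {a..t} e"
    using \<open>t \<in> {a..b}\<close> absolutely_continuous_on_subset[OF ac] by auto
  show "AE s in lebesgue. s \<in> {a..t} \<longrightarrow> (e has_vector_derivative 0) (at s within {a..t})"
    using deriv
    by eventually_elim (use \<open>t \<in> {a..b}\<close> in \<open>auto intro: has_vector_derivative_within_subset\<close>)
qed

lemma derivative_chain_vanishes:
  fixes e :: "nat \<Rightarrow> real \<Rightarrow> 'a::real_normed_vector"
  assumes deriv: "AE s in lebesgue. s \<in> {a..b} \<longrightarrow> (\<forall>j<r.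
       (e j has_vector_derivative (if Suc j < r then e (Suc j) s else 0)) (at s within {a..b}))"
    and ac: "\<And>j. j < r \<Longrightarrow> absolutely_continuous_on {a..b} (e j)"
    and initial: "\<And>j. j < r \<Longrightarrow> e j a = 0"
    and "j < r" "t \<in> {a..b}"
  shows "e j t = 0"
proof -
  have vanishes: "e n t = 0"
    if "n < r" "t \<in> {a..b}" and next_vanishes: "\<And>s. s \<in> {a..b} \<Longrightarrow> Suc n < r \<Longrightarrow> e (Suc n) s = 0"
    for n t
  proof -
    have "AE s in lebesgue. s \<in> {a..b} \<longrightarrow> (e n has_vector_derivative 0) (at s within {a..b})"
      using deriv by eventually_elim (use \<open>n < r\<close> next_vanishes in \<open>auto split: if_splits\<close>)
    then have "e n t = e n a"
      using absolutely_continuous_on_derivative_zero_ae_const[OF ac[OF \<open>n < r\<close>]] that by blast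
    with initial[OF \<open>n < r\<close>] show ?thesis by simp
  qed
  have "j \<le> r - 1" using \<open>j < r\<close> by simp
  then have "\<forall>t\<in>{a..b}. e j t = 0"
  proof (induction j rule: inc_induct)
    case base
    show ?case using \<open>j < r\<close> by (auto intro: vanishes)
  next
    case (step n)
    then show ?case by (auto intro: vanishes)
  qed
  with \<open>t \<in> {a..b}\<close> show ?thesis by blast
qed

lemma Ck_on_SucD: "Ck_on (Suc k) S h \<Longrightarrow> Ck_on k S h"
proof (induction k arbitrary: h)
  case 0
  then obtain h' where "\<forall>p\<in>S. (h has_derivative h' p) (at p within S)" by auto
  then show ?case
    by (auto simp: continuous_on_eq_continuous_within intro: has_derivative_continuous)
next
  case (Suc k)
  then obtain h' where "\<forall>p\<in>S. (h has_derivative h' p) (at p within S)"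
    and "\<forall>v. Ck_on (Suc k) S (\<lambda>p. h' p v)"
    by auto
  then show ?case using Suc.IH by auto
qed

lemma Ck_on_cong: "Ck_on k S h \<Longrightarrow> (\<And>p. p \<in> S \<Longrightarrow> h p = h2 p) \<Longrightarrow> Ck_on k S h2"
proof (induction k arbitrary: h h2)
  case 0
  then show ?case using continuous_on_cong by (metis Ck_on.simps(1))
next
  case (Suc k)
  then obtain h' where h': "\<forall>p\<in>S. (h has_derivative h' p) (at p within S)"
    and "\<forall>v. Ck_on k S (\<lambda>p. h' p v)"
    by auto
  moreover have "\<forall>p\<in>S. (h2 has_derivative h' p) (at p within S)"
    using h' Suc.prems(2) by (metis has_derivative_transform)
  ultimately show ?case by auto
qed

lemma Ck_on_const: "Ck_on k S (\<lambda>p. c)"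
proof (induction k arbitrary: c)
  case 0
  then show ?case by simp
next
  case (Suc k)
  have "\<forall>p\<in>S. ((\<lambda>p. c) has_derivative (\<lambda>p v. 0) p) (at p within S)" by simp
  then show ?case using Suc unfolding Ck_on.simps(2) by (intro exI[of _ "\<lambda>p v. 0"]) simp
qed

lemma Ck_on_add: "Ck_on k S h1 \<Longrightarrow> Ck_on k S h2 \<Longrightarrow> Ck_on k S (\<lambda>p. h1 p + h2 p)"
proof (induction k arbitrary: h1 h2)
  case 0
  then show ?case by (simp add: continuous_on_add)
next
  case (Suc k)
  from Suc.prems obtain h1' h2' where
    d1: "\<forall>p\<in>S. (h1 has_derivative h1' p) (at p within S)" "\<forall>v. Ck_on k S (\<lambda>p. h1' p v)" and
    d2: "\<forall>p\<in>S. (h2 has_derivative h2' p) (at p within S)" "\<forall>v. Ck_on k S (\<lambda>p. h2' p v)"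
    by auto
  have "\<forall>p\<in>S. ((\<lambda>p. h1 p + h2 p) has_derivative (\<lambda>p v. h1' p v + h2' p v) p) (at p within S)"
    using d1 d2 by (auto intro: has_derivative_add)
  moreover have "\<forall>v. Ck_on k S (\<lambda>p. h1' p v + h2' p v)" using d1 d2 Suc.IH by auto
  ultimately show ?case
    unfolding Ck_on.simps(2) by (intro exI[of _ "\<lambda>p v. h1' p v + h2' p v"]) simp
qed

lemma Ck_on_bounded_linear:
  "bounded_linear L \<Longrightarrow> Ck_on k S h \<Longrightarrow> Ck_on k S (\<lambda>p. L (h p))"
proof (induction k arbitrary: h)
  case 0
  then show ?case by (simp add: linear_continuous_on continuous_on_compose2[of UNIV L])
next
  case (Suc k)
  from Suc.prems obtain h' where
    d: "\<forall>p\<in>S. (h has_derivative h' p) (at p within S)" "\<forall>v. Ck_on k S (\<lambda>p. h' p v)"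
    by auto
  have "\<forall>p\<in>S. ((\<lambda>p. L (h p)) has_derivative (\<lambda>p v. L (h' p v)) p) (at p within S)"
    using d Suc.prems(1) by (auto intro: bounded_linear.has_derivative)
  moreover have "\<forall>v. Ck_on k S (\<lambda>p. L (h' p v))" using d Suc by auto
  ultimately show ?case unfolding Ck_on.simps(2) by (intro exI[of _ "\<lambda>p v. L (h' p v)"]) simp
qed

lemma Ck_on_mult:
  fixes h1 h2 :: "'a::real_normed_vector \<Rightarrow> 'b::real_normed_algebra"
  shows "Ck_on k S h1 \<Longrightarrow> Ck_on k S h2 \<Longrightarrow> Ck_on k S (\<lambda>p. h1 p * h2 p)"
proof (induction k arbitrary: h1 h2)
  case 0
  then show ?case by (simp add: continuous_on_mult)
next
  case (Suc k)
  from Suc.prems obtain h1' h2' where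
    d1: "\<forall>p\<in>S. (h1 has_derivative h1' p) (at p within S)" "\<forall>v. Ck_on k S (\<lambda>p. h1' p v)" and
    d2: "\<forall>p\<in>S. (h2 has_derivative h2' p) (at p within S)" "\<forall>v. Ck_on k S (\<lambda>p. h2' p v)"
    by auto
  have "\<forall>p\<in>S. ((\<lambda>p. h1 p * h2 p) has_derivative (\<lambda>p v. h1 p * h2' p v + h1' p v * h2 p) p)
      (at p within S)"
    using d1 d2 by (auto intro: has_derivative_mult)
  moreover have "\<forall>v. Ck_on k S (\<lambda>p. h1 p * h2' p v + h1' p v * h2 p)"
  proof
    fix v
    have "Ck_on k S h1" "Ck_on k S h2" using Suc.prems by (simp_all only: Ck_on_SucD)
    then show "Ck_on k S (\<lambda>p. h1 p * h2' p v + h1' p v * h2 p)"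
      using d1(2) d2(2) by (intro Ck_on_add Suc.IH) auto
  qed
  ultimately show ?case
    unfolding Ck_on.simps(2) by (intro exI[of _ "\<lambda>p v. h1 p * h2' p v + h1' p v * h2 p"]) simp
qed

lemma Ck_on_sum:
  "finite I \<Longrightarrow> (\<And>i. i \<in> I \<Longrightarrow> Ck_on k S (h i)) \<Longrightarrow> Ck_on k S (\<lambda>p. \<Sum>i\<in>I. h i p)"
  by (induction I rule: finite_induct) (auto intro: Ck_on_add Ck_on_const)

lemma smooth_on_cong: "smooth_on S h \<Longrightarrow> (\<And>p. p \<in> S \<Longrightarrow> h p = h2 p) \<Longrightarrow> smooth_on S h2"
  unfolding smooth_on_def using Ck_on_cong by metis

lemma smooth_on_add: "smooth_on S h1 \<Longrightarrow> smooth_on S h2 \<Longrightarrow> smooth_on S (\<lambda>p. h1 p + h2 p)"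
  unfolding smooth_on_def using Ck_on_add by metis

lemma smooth_on_bounded_linear:
  "bounded_linear L \<Longrightarrow> smooth_on S h \<Longrightarrow> smooth_on S (\<lambda>p. L (h p))"
  unfolding smooth_on_def using Ck_on_bounded_linear by metis

lemma smooth_on_mult:
  fixes h1 h2 :: "'a::real_normed_vector \<Rightarrow> 'b::real_normed_algebra"
  shows "smooth_on S h1 \<Longrightarrow> smooth_on S h2 \<Longrightarrow> smooth_on S (\<lambda>p. h1 p * h2 p)"
  unfolding smooth_on_def using Ck_on_mult by metis

lemma smooth_on_sum:
  "finite I \<Longrightarrow> (\<And>i. i \<in> I \<Longrightarrow> smooth_on S (h i)) \<Longrightarrow> smooth_on S (\<lambda>p. \<Sum>i\<in>I. h i p)"
  unfolding smooth_on_def using Ck_on_sum by metis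

lemma has_derivative_within_dom_unique:
  fixes H :: "real \<times> (real^'n) \<Rightarrow> 'b::real_normed_vector"
  assumes "p \<in> dom t0"
    and "(H has_derivative A) (at p within dom t0)" "(H has_derivative B) (at p within dom t0)"
  shows "A = B"
proof (rule frechet_derivative_unique_within[OF assms(2,3)])
  fix i :: "real \<times> (real^'n)" and e :: real assume "i \<in> Basis" "e > 0"
  show "\<exists>d. 0 < \<bar>d\<bar> \<and> \<bar>d\<bar> < e \<and> p + d *\<^sub>R i \<in> dom t0"
  proof (intro exI conjI)
    show "0 < \<bar>e/2\<bar>" "\<bar>e/2\<bar> < e" using \<open>e > 0\<close> by auto
    have "fst i \<ge> 0" using \<open>i \<in> Basis\<close> by (auto simp: Basis_prod_def)
    moreover have "fst p \<ge> t0" using assms(1) by (auto simp: dom_def mem_Times_iff)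
    moreover have "e * fst i / 2 \<ge> 0" using \<open>e > 0\<close> \<open>fst i \<ge> 0\<close> by simp
    ultimately have "fst (p + (e/2) *\<^sub>R i) \<ge> t0" by simp
    then show "p + (e/2) *\<^sub>R i \<in> dom t0" by (simp add: dom_def mem_Times_iff)
  qed
qed

lemma smooth_on_dom_frechet_derivative:
  fixes H :: "real \<times> (real^'n) \<Rightarrow> 'b::real_normed_vector"
  assumes "smooth_on (dom t0) H"
  shows "p \<in> dom t0 \<Longrightarrow>
      (H has_derivative frechet_derivative H (at p within dom t0)) (at p within dom t0)"
    and "smooth_on (dom t0) (\<lambda>p. frechet_derivative H (at p within dom t0) v)"
proof -
  have "Ck_on (Suc 0) (dom t0) H" using assms smooth_on_def by blast
  then obtain h' where "\<forall>p\<in>dom t0. (H has_derivative h' p) (at p within dom t0)" by auto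
  then show H: "(H has_derivative frechet_derivative H (at p within dom t0)) (at p within dom t0)"
    if "p \<in> dom t0" for p
    using that by (meson differentiable_def frechet_derivative_works)
  show "smooth_on (dom t0) (\<lambda>p. frechet_derivative H (at p within dom t0) v)"
    unfolding smooth_on_def
  proof
    fix k
    have "Ck_on (Suc k) (dom t0) H" using assms smooth_on_def by blast
    then obtain h' where d: "\<forall>p\<in>dom t0. (H has_derivative h' p) (at p within dom t0)"
      and Ck: "\<forall>v. Ck_on k (dom t0) (\<lambda>p. h' p v)"
      by auto
    have "h' p v = frechet_derivative H (at p within dom t0) v" if "p \<in> dom t0" for p
      using has_derivative_within_dom_unique[OF that] d H[OF that] that by metis
    with Ck show "Ck_on k (dom t0) (\<lambda>p. frechet_derivative H (at p within dom t0) v)"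
      by (blast intro: Ck_on_cong)
  qed
qed

lemma linear_apply_Pair_one:
  fixes y :: "real^'n" and L :: "real \<times> (real^'n) \<Rightarrow> 'b::real_vector"
  assumes "linear L"
  shows "L (1, y) = L (1, 0) + (\<Sum>i\<in>UNIV. y$i *\<^sub>R L (0, axis i 1))"
proof -
  have "(1, y) = (1, 0) + (\<Sum>i\<in>UNIV. y$i *\<^sub>R ((0::real), axis i (1::real)))"
    using basis_expansion[of y] by (simp add: prod_eq_iff fst_sum snd_sum scalar_mult_eq_scaleR)
  then show ?thesis
    by (simp only: linear_add[OF assms] linear_sum[OF assms] linear_scale[OF assms])
qed

lemma smooth_on_Lf:
  fixes f :: "real \<Rightarrow> real^'n \<Rightarrow> real^'n" and \<psi> :: "real \<Rightarrow> real^'n \<Rightarrow> real"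
  assumes f: "smooth_on (dom t0) (\<lambda>(t,y). f t y)" and \<psi>: "smooth_on (dom t0) (\<lambda>(t,y). \<psi> t y)"
  shows "smooth_on (dom t0) (\<lambda>(t,y). Lf t0 f \<psi> t y)"
proof -
  define D where "D p = frechet_derivative (\<lambda>(s,y). \<psi> s y) (at p within dom t0)" for p
  have D: "\<And>v. smooth_on (dom t0) (\<lambda>p. D p v)"
    using smooth_on_dom_frechet_derivative(2)[OF \<psi>] unfolding D_def .
  have f_nth: "\<And>i. smooth_on (dom t0) (\<lambda>p. (case p of (t,y) \<Rightarrow> f t y) $ i)"
    using smooth_on_bounded_linear[OF bounded_linear_vec_nth f] .
  have "smooth_on (dom t0)
      (\<lambda>p. D p (1, 0) + (\<Sum>i\<in>UNIV. (case p of (t,y) \<Rightarrow> f t y) $ i * D p (0, axis i 1)))"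
    by (intro smooth_on_add smooth_on_sum smooth_on_mult D f_nth) simp
  moreover have "D p (1, 0) + (\<Sum>i\<in>UNIV. (case p of (t,y) \<Rightarrow> f t y) $ i * D p (0, axis i 1))
      = (\<lambda>(t,y). Lf t0 f \<psi> t y) p" if "p \<in> dom t0" for p
  proof -
    obtain t y where p: "p = (t, y)" by fastforce
    have "linear (D p)"
      using smooth_on_dom_frechet_derivative(1)[OF \<psi> that] has_derivative_linear
      unfolding D_def by blast
    then show ?thesis
      using linear_apply_Pair_one[of "D p" "f t y"] p by (simp add: Lf_def Dpsi_def D_def)
  qed
  ultimately show ?thesis by (rule smooth_on_cong)
qed

lemma smooth_on_Lf_pow:
  fixes f :: "real \<Rightarrow> real^'n \<Rightarrow> real^'n" and \<psi> :: "real \<Rightarrow> real^'n \<Rightarrow> real"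
  assumes "smooth_on (dom t0) (\<lambda>(t,y). f t y)" and "smooth_on (dom t0) (\<lambda>(t,y). \<psi> t y)"
  shows "smooth_on (dom t0) (\<lambda>(t,y). Lf_pow t0 f j \<psi> t y)"
  using assms by (induction j) (simp_all add: Lf_pow_def smooth_on_Lf)

lemma smooth_on_comp:
  assumes "smooth_on (dom t0) (\<lambda>(t,y). \<phi> t y)"
  shows "smooth_on (dom t0) (\<lambda>(t,y). comp \<phi> k t y)"
  unfolding comp_def
  by (rule smooth_on_cong[OF smooth_on_bounded_linear[OF bounded_linear_vec_nth assms]]) auto

lemma Ck_on_Suc_lipschitz_on:
  fixes H :: "'a::euclidean_space \<Rightarrow> 'b::real_normed_vector"
  assumes "Ck_on (Suc 0) S H" "compact K" "convex K" "K \<subseteq> S"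
  obtains B where "B-lipschitz_on K H"
proof -
  obtain H' where H': "\<forall>p\<in>S. (H has_derivative H' p) (at p within S)"
    and "\<forall>v. continuous_on S (\<lambda>p. H' p v)"
    using assms(1) by auto
  then have "continuous_on K (\<lambda>p. H' p v)" for v
    using continuous_on_subset \<open>K \<subseteq> S\<close> by blast
  then have "bounded ((\<lambda>p. H' p v) ` K)" for v
    using compact_imp_bounded compact_continuous_image \<open>compact K\<close> by blast
  then have "\<exists>M. \<forall>p\<in>K. norm (H' p v) \<le> M" for v
    unfolding bounded_iff by simp
  then obtain M where M: "\<And>v p. p \<in> K \<Longrightarrow> norm (H' p v) \<le> M v" by metis
  define B where "B = (\<Sum>i\<in>Basis. max (M i) 0)"
  have "onorm (H' p) \<le> B" if "p \<in> K" for p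
  proof -
    have "bounded_linear (H' p)" using H' \<open>K \<subseteq> S\<close> that has_derivative_bounded_linear by blast
    then have "onorm (H' p) \<le> (\<Sum>i\<in>Basis. norm (H' p i))" by (rule onorm_componentwise)
    also have "\<dots> \<le> B" unfolding B_def using M[OF that] by (intro sum_mono) (meson max.coboundedI1)
    finally show ?thesis .
  qed
  moreover have "B \<ge> 0" unfolding B_def by (intro sum_nonneg) simp
  moreover have "(H has_derivative H' p) (at p within K)" if "p \<in> K" for p
    using H' \<open>K \<subseteq> S\<close> that by (blast intro: has_derivative_subset)
  ultimately show thesis using that bounded_derivative_imp_lipschitz[OF _ \<open>convex K\<close>] by blast
qed

lemma absolutely_continuous_on_Ck_on_Suc_compose:
  fixes H :: "real \<times> 'a::euclidean_space \<Rightarrow> 'b::real_normed_vector"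
  assumes H: "Ck_on (Suc 0) S H" and "{a..b} \<times> UNIV \<subseteq> S"
    and x: "absolutely_continuous_on {a..b} x"
  shows "absolutely_continuous_on {a..b} (\<lambda>t. H (t, x t))"
proof -
  have "bounded (x ` {a..b})"
    using x by (meson absolutely_continuous_on_imp_continuous_on compact_Icc
        compact_continuous_image compact_imp_bounded)
  then obtain R where R: "\<And>t. t \<in> {a..b} \<Longrightarrow> norm (x t) \<le> R" unfolding bounded_iff by blast
  define K :: "(real \<times> 'a) set" where "K = {a..b} \<times> cball 0 R"
  have "compact K" "convex K" "K \<subseteq> S"
    using \<open>{a..b} \<times> UNIV \<subseteq> S\<close> by (auto simp: K_def compact_Times convex_Times)
  then obtain B where "B-lipschitz_on K H" using Ck_on_Suc_lipschitz_on[OF H] by blast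
  moreover have "(\<lambda>t. (t, x t)) ` {a..b} \<subseteq> K" using R by (auto simp: K_def)
  moreover have "absolutely_continuous_on {a..b} (\<lambda>t. (t, x t))"
    using absolutely_continuous_on_Pair[OF absolutely_continuous_on_id x] .
  ultimately show ?thesis using absolutely_continuous_on_lipschitz_compose by blast
qed

lemma has_real_derivative_Lf_pow_trajectory:
  fixes f :: "real \<Rightarrow> real^'n \<Rightarrow> real^'n" and g :: "real \<Rightarrow> real^'n \<Rightarrow> real^'m^'n"
    and \<psi> :: "real \<Rightarrow> real^'n \<Rightarrow> real" and x :: "real \<Rightarrow> real^'n"
  assumes f: "smooth_on (dom t0) (\<lambda>(t,y). f t y)" and \<psi>: "smooth_on (dom t0) (\<lambda>(t,y). \<psi> t y)"
    and "S \<subseteq> {t0..}" "t \<in> S"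
    and x: "(x has_vector_derivative (f t (x t) + g t (x t) *v U)) (at t within S)"
  shows "((\<lambda>s. Lf_pow t0 f j \<psi> s (x s)) has_real_derivative
      Lf_pow t0 f (Suc j) \<psi> t (x t) + LgLf t0 f g j \<psi> t (x t) \<bullet> U) (at t within S)"
proof -
  define H where "H = (\<lambda>(s,y). Lf_pow t0 f j \<psi> s y)"
  define D where "D = Dpsi t0 (Lf_pow t0 f j \<psi>) t (x t)"
  have "(t, x t) \<in> dom t0" "(\<lambda>s. (s, x s)) ` S \<subseteq> dom t0"
    using \<open>S \<subseteq> {t0..}\<close> \<open>t \<in> S\<close> by (auto simp: dom_def)
  then have "(H has_derivative D) (at (t, x t) within (\<lambda>s. (s, x s)) ` S)"
    using smooth_on_dom_frechet_derivative(1)[OF smooth_on_Lf_pow[OF f \<psi>]]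
    unfolding D_def Dpsi_def H_def by (blast intro: has_derivative_subset)
  from vector_derivative_diff_chain_within
      [OF has_vector_derivative_Pair[OF has_vector_derivative_id x] this]
  have deriv: "((\<lambda>s. Lf_pow t0 f j \<psi> s (x s)) has_vector_derivative
      D (1, f t (x t) + g t (x t) *v U)) (at t within S)"
    by (simp add: o_def H_def)
  have "linear D" using \<open>(H has_derivative D) _\<close> has_derivative_linear by blast
  then have "D (1, f t (x t) + g t (x t) *v U) = D (1, f t (x t)) + D (0, g t (x t) *v U)"
    using linear_add[of D "(1, f t (x t))" "(0, g t (x t) *v U)"] by simp
  also have "(0::real, g t (x t) *v U) = (\<Sum>i\<in>UNIV. U$i *\<^sub>R (0, column i (g t (x t))))"
    by (simp add: prod_eq_iff fst_sum snd_sum matrix_mult_sum scalar_mult_eq_scaleR)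
  also have "D \<dots> = (\<Sum>i\<in>UNIV. U$i * D (0, column i (g t (x t))))"
    by (simp only: linear_sum[OF \<open>linear D\<close>] linear_scale[OF \<open>linear D\<close>] real_scaleR_def)
  also have "\<dots> = LgLf t0 f g j \<psi> t (x t) \<bullet> U"
    by (simp add: LgLf_def D_def inner_vec_def mult.commute)
  finally show ?thesis
    using deriv by (simp add: Lf_pow_def Lf_def D_def has_real_derivative_iff_has_vector_derivative)
qed

lemma matrix_inv_right:
  fixes A :: "real^'n^'m"
  shows "invertible A \<Longrightarrow> A ** matrix_inv A = mat 1"
  unfolding invertible_def matrix_inv_def
  using someI_ex[of "\<lambda>A'. A ** A' = mat 1 \<and> A' ** A = mat 1"] by blast

lemma LgLf_inner_feedback:
  assumes "invertible (Omega_g t0 f g \<phi> \<rho> t y)"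
  shows "LgLf t0 f g (\<rho> k - 1) (comp \<phi> k) t y \<bullet> feedback t0 f g \<phi> \<rho> t y z w
    = - (Ssum (z k) (\<rho> k) + Lf_pow t0 f (\<rho> k) (comp \<phi> k) t y + z k 0 * w $ k)"
proof -
  let ?\<Omega> = "Omega_g t0 f g \<phi> \<rho> t y" and ?v = "Omega_f t0 f \<phi> \<rho> t y z + Dz z w"
  have "?\<Omega> *v feedback t0 f g \<phi> \<rho> t y z w = - ((?\<Omega> ** matrix_inv ?\<Omega>) *v ?v)"
    unfolding feedback_def
    by (simp add: matrix_vector_mul_assoc linear_neg[OF matrix_vector_mul_linear])
  also have "\<dots> = - ?v" using matrix_inv_right[OF assms] by simp
  finally have "(?\<Omega> *v feedback t0 f g \<phi> \<rho> t y z w) $ k = - ?v $ k" by simp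
  then show ?thesis
    by (simp add: matrix_vector_mul_component Omega_g_def Omega_f_def Dz_def)
qed

(* If a i is the i-th derivative of a 0, this is the j-th derivative of (a 0)^2/2. *)
definition half_square_deriv :: "(nat \<Rightarrow> real) \<Rightarrow> nat \<Rightarrow> real" where
  "half_square_deriv a j = (1/2) * (\<Sum>i=0..j. real (j choose i) * a (j - i) * a i)"

lemma half_square_deriv_0: "half_square_deriv a 0 = a 0 ^ 2 / 2"
  by (simp add: half_square_deriv_def power2_eq_square)

lemma half_square_deriv_eq_Ssum:
  assumes "1 \<le> j"
  shows "half_square_deriv a j = a j * a 0 + Ssum a j"
proof -
  obtain m where j: "j = Suc m" using assms by (cases j) auto
  have "(\<Sum>i=0..Suc m. real (Suc m choose i) * a (Suc m - i) * a i)
      = a (Suc m) * a 0 + (\<Sum>i=1..m. real (Suc m choose i) * a (Suc m - i) * a i) + a 0 * a (Suc m)"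
    by (simp add: sum.atLeast0_atMost_Suc sum.atLeast_Suc_atMost)
  then show ?thesis unfolding j half_square_deriv_def Ssum_def by (simp add: algebra_simps)
qed

lemma Ssum_cong: "(\<And>i. 1 \<le> i \<Longrightarrow> i < j \<Longrightarrow> a i = b i) \<Longrightarrow> Ssum a j = Ssum b j"
  unfolding Ssum_def by (intro arg_cong[where f = "\<lambda>s. 1/2 * s"] sum.cong) auto

lemma sum_binomial_products_Suc:
  fixes a :: "nat \<Rightarrow> real"
  shows "(\<Sum>i=0..j. real (j choose i) * (a (Suc (j - i)) * a i + a (j - i) * a (Suc i)))
       = (\<Sum>i=0..Suc j. real (Suc j choose i) * a (Suc j - i) * a i)"
proof -
  define S1 where "S1 = (\<Sum>i=0..j. real (j choose i) * a (Suc (j - i)) * a i)"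
  define S2 where "S2 = (\<Sum>i=0..j. real (j choose Suc i) * a (j - i) * a (Suc i))"
  define S3 where "S3 = (\<Sum>i=0..j. real (j choose i) * a (j - i) * a (Suc i))"
  have "(\<Sum>i=0..Suc j. real (j choose i) * a (Suc j - i) * a i) = a (Suc j) * a 0 + S2"
    unfolding S2_def by (subst sum.atLeast0_atMost_Suc_shift) (simp add: o_def)
  moreover have "(\<Sum>i=0..Suc j. real (j choose i) * a (Suc j - i) * a i) = S1"
    unfolding S1_def by (subst sum.atLeast0_atMost_Suc) (auto intro!: sum.cong simp: Suc_diff_le)
  ultimately have S1: "S1 = a (Suc j) * a 0 + S2" by simp
  have "(\<Sum>i=0..Suc j. real (Suc j choose i) * a (Suc j - i) * a i)
      = a (Suc j) * a 0 + (\<Sum>i=0..j. real (Suc j choose Suc i) * a (j - i) * a (Suc i))"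
    by (subst sum.atLeast0_atMost_Suc_shift) (simp add: o_def)
  also have "(\<Sum>i=0..j. real (Suc j choose Suc i) * a (j - i) * a (Suc i)) = S3 + S2"
    unfolding S2_def S3_def by (simp add: sum.distrib distrib_right)
  finally show ?thesis
    using S1 unfolding S1_def S3_def by (simp add: sum.distrib distrib_left mult.assoc)
qed

lemma has_real_derivative_half_square_deriv:
  assumes "\<And>i. i \<le> j \<Longrightarrow> (A i has_real_derivative A (Suc i) t) (at t within S)"
  shows "((\<lambda>s. half_square_deriv (\<lambda>i. A i s) j) has_real_derivative
      half_square_deriv (\<lambda>i. A i t) (Suc j)) (at t within S)"
proof -
  have "((\<lambda>s. real (j choose i) * A (j - i) s * A i s) has_real_derivative
      real (j choose i) * (A (Suc (j - i)) t * A i t + A (j - i) t * A (Suc i) t)) (at t within S)"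
    if "i \<in> {0..j}" for i
    using DERIV_cmult[OF DERIV_mult[OF assms[of "j - i"] assms[of i]], of "real (j choose i)"] that
    by (simp add: ac_simps)
  then have "((\<lambda>s. half_square_deriv (\<lambda>i. A i s) j) has_real_derivative
      (1/2) * (\<Sum>i=0..j. real (j choose i)
        * (A (Suc (j - i)) t * A i t + A (j - i) t * A (Suc i) t))) (at t within S)"
    unfolding half_square_deriv_def by (intro DERIV_cmult DERIV_sum) auto
  then show ?thesis
    unfolding half_square_deriv_def sum_binomial_products_Suc[of j "\<lambda>i. A i t"] .
qed

(* z_k, z_k', ..., z_k^(rho_k - 1) followed by w_k, which plays the role of z_k^(rho_k);
   entries beyond rho_k are junk. *)
definition z_jet :: "('m \<Rightarrow> nat) \<Rightarrow> (real \<Rightarrow> 'm \<Rightarrow> nat \<Rightarrow> real) \<Rightarrow> (real \<Rightarrow> real^'m)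
    \<Rightarrow> 'm \<Rightarrow> real \<Rightarrow> nat \<Rightarrow> real" where
  "z_jet \<rho> z w k s i = (if i < \<rho> k then z s k i else w s $ k)"

(* The j-th time derivative of phi_k(s, x(s)) + z_k(s)^2/2 along the augmented dynamics. *)
definition defect :: "real \<Rightarrow> (real \<Rightarrow> real^'n \<Rightarrow> real^'n) \<Rightarrow> (real \<Rightarrow> real^'n \<Rightarrow> real^'m)
    \<Rightarrow> ('m \<Rightarrow> nat) \<Rightarrow> (real \<Rightarrow> real^'n) \<Rightarrow> (real \<Rightarrow> 'm \<Rightarrow> nat \<Rightarrow> real) \<Rightarrow> (real \<Rightarrow> real^'m)
    \<Rightarrow> 'm \<Rightarrow> nat \<Rightarrow> real \<Rightarrow> real" where
  "defect t0 f \<phi> \<rho> x z w k j s =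
     Lf_pow t0 f j (comp \<phi> k) s (x s) + half_square_deriv (z_jet \<rho> z w k s) j"

lemma defect_0:
  assumes "1 \<le> \<rho> k"
  shows "defect t0 f \<phi> \<rho> x z w k 0 s = \<phi> s (x s) $ k + (z s k 0)\<^sup>2 / 2"
  using assms by (simp add: defect_def half_square_deriv_0 z_jet_def Lf_pow_def comp_def)

lemma defect_initial:
  assumes "\<phi> t0 (x t0) $ k < 0" and z0: "z t0 k 0 = sqrt (- 2 * \<phi> t0 (x t0) $ k)"
    and z: "\<And>i. 1 \<le> i \<Longrightarrow> i \<le> \<rho> k - 1 \<Longrightarrow>
      z t0 k i = - (Lf_pow t0 f i (comp \<phi> k) t0 (x t0) + Ssum (z t0 k) i) / z t0 k 0"
    and "j < \<rho> k"
  shows "defect t0 f \<phi> \<rho> x z w k j t0 = 0"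
proof (cases "j = 0")
  case True
  have "(z t0 k 0)\<^sup>2 = - 2 * \<phi> t0 (x t0) $ k" using z0 \<open>\<phi> t0 (x t0) $ k < 0\<close> by simp
  then show ?thesis using True \<open>j < \<rho> k\<close> by (simp add: defect_0)
next
  case False
  have "z t0 k 0 > 0" using z0 \<open>\<phi> t0 (x t0) $ k < 0\<close> by simp
  have "Ssum (z_jet \<rho> z w k t0) j = Ssum (z t0 k) j"
    by (rule Ssum_cong) (use \<open>j < \<rho> k\<close> in \<open>simp add: z_jet_def\<close>)
  then have "half_square_deriv (z_jet \<rho> z w k t0) j = z t0 k j * z t0 k 0 + Ssum (z t0 k) j"
    using False \<open>j < \<rho> k\<close> by (simp add: half_square_deriv_eq_Ssum z_jet_def)
  also have "\<dots> = - Lf_pow t0 f j (comp \<phi> k) t0 (x t0)"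
    using z[of j] False \<open>j < \<rho> k\<close> \<open>z t0 k 0 > 0\<close> by simp
  finally show ?thesis by (simp add: defect_def)
qed

lemma absolutely_continuous_on_defect:
  assumes f: "smooth_on (dom t0) (\<lambda>(t,y). f t y)" and \<phi>: "smooth_on (dom t0) (\<lambda>(t,y). \<phi> t y)"
    and x: "absolutely_continuous_on {t0..T} x"
    and z: "\<And>i. i < \<rho> k \<Longrightarrow> absolutely_continuous_on {t0..T} (\<lambda>s. z s k i)"
    and "j < \<rho> k"
  shows "absolutely_continuous_on {t0..T} (defect t0 f \<phi> \<rho> x z w k j)"
proof -
  have "Ck_on (Suc 0) (dom t0) (\<lambda>(t,y). Lf_pow t0 f j (comp \<phi> k) t y)"
    using smooth_on_Lf_pow[OF f smooth_on_comp[OF \<phi>]] unfolding smooth_on_def by blast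
  from absolutely_continuous_on_Ck_on_Suc_compose[OF this _ x]
  have "absolutely_continuous_on {t0..T} (\<lambda>s. Lf_pow t0 f j (comp \<phi> k) s (x s))"
    by (simp add: dom_def subset_iff)
  moreover have "absolutely_continuous_on {t0..T}
      (\<lambda>s. 1/2 * (\<Sum>i=0..j. real (j choose i) * z s k (j - i) * z s k i))"
    using \<open>j < \<rho> k\<close>
    by (intro absolutely_continuous_on_mult absolutely_continuous_on_const
        absolutely_continuous_on_sum z) auto
  moreover have "defect t0 f \<phi> \<rho> x z w k j = (\<lambda>s. Lf_pow t0 f j (comp \<phi> k) s (x s)
      + 1/2 * (\<Sum>i=0..j. real (j choose i) * z s k (j - i) * z s k i))"
    unfolding defect_def half_square_deriv_def z_jet_def using \<open>j < \<rho> k\<close>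
    by (intro ext arg_cong[where f = "(+) _"] arg_cong[where f = "(*) _"] sum.cong) auto
  ultimately show ?thesis by (simp add: absolutely_continuous_on_add)
qed

lemma has_real_derivative_z_jet:
  assumes z: "\<And>j. j + 2 \<le> \<rho> k \<Longrightarrow> ((\<lambda>s. z s k j) has_vector_derivative z t k (j + 1)) (at t within S)"
    and z_last: "((\<lambda>s. z s k (\<rho> k - 1)) has_vector_derivative w t $ k) (at t within S)"
    and "i < \<rho> k"
  shows "((\<lambda>s. z_jet \<rho> z w k s i) has_real_derivative z_jet \<rho> z w k t (Suc i)) (at t within S)"
proof (cases "Suc i < \<rho> k")
  case True
  then show ?thesis using z[of i] \<open>i < \<rho> k\<close>
    by (simp add: z_jet_def has_real_derivative_iff_has_vector_derivative)
next
  case False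
  then have "i = \<rho> k - 1" using \<open>i < \<rho> k\<close> by simp
  then show ?thesis using z_last False \<open>i < \<rho> k\<close>
    by (simp add: z_jet_def has_real_derivative_iff_has_vector_derivative)
qed

lemma defect_derivative_eq:
  assumes reldeg: "has_relative_degree t0 f g \<phi> \<rho>"
    and inv: "invertible (Omega_g t0 f g \<phi> \<rho> t (x t))" and "t0 \<le> t" and "j < \<rho> k"
  shows "Lf_pow t0 f (Suc j) (comp \<phi> k) t (x t)
      + LgLf t0 f g j (comp \<phi> k) t (x t) \<bullet> feedback t0 f g \<phi> \<rho> t (x t) (z t) (w t)
      + half_square_deriv (z_jet \<rho> z w k t) (Suc j)
    = (if Suc j < \<rho> k then defect t0 f \<phi> \<rho> x z w k (Suc j) t else 0)"
proof (cases "Suc j < \<rho> k")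
  case True
  then have "LgLf t0 f g j (comp \<phi> k) t (x t) = 0"
    using reldeg \<open>t0 \<le> t\<close> unfolding has_relative_degree_def dom_def by auto
  with True show ?thesis by (simp add: defect_def)
next
  case False
  then have j: "Suc j = \<rho> k" using \<open>j < \<rho> k\<close> by simp
  have "Ssum (z_jet \<rho> z w k t) (\<rho> k) = Ssum (z t k) (\<rho> k)"
    by (rule Ssum_cong) (simp add: z_jet_def)
  then have "half_square_deriv (z_jet \<rho> z w k t) (Suc j) = w t $ k * z t k 0 + Ssum (z t k) (\<rho> k)"
    using j by (simp add: half_square_deriv_eq_Ssum z_jet_def)
  moreover have "j = \<rho> k - 1" using j by simp
  ultimately show ?thesis
    using LgLf_inner_feedback[OF inv, of k "z t" "w t"] False j by simp
qed

lemma has_real_derivative_defect: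
  assumes f: "smooth_on (dom t0) (\<lambda>(t,y). f t y)" and \<phi>: "smooth_on (dom t0) (\<lambda>(t,y). \<phi> t y)"
    and reldeg: "has_relative_degree t0 f g \<phi> \<rho>"
    and inv: "invertible (Omega_g t0 f g \<phi> \<rho> t (x t))"
    and "S \<subseteq> {t0..}" "t \<in> S"
    and x: "(x has_vector_derivative
      (f t (x t) + g t (x t) *v feedback t0 f g \<phi> \<rho> t (x t) (z t) (w t))) (at t within S)"
    and z: "\<And>j. j + 2 \<le> \<rho> k \<Longrightarrow> ((\<lambda>s. z s k j) has_vector_derivative z t k (j + 1)) (at t within S)"
    and z_last: "((\<lambda>s. z s k (\<rho> k - 1)) has_vector_derivative w t $ k) (at t within S)"
    and "j < \<rho> k"
  shows "(defect t0 f \<phi> \<rho> x z w k j has_real_derivative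
      (if Suc j < \<rho> k then defect t0 f \<phi> \<rho> x z w k (Suc j) t else 0)) (at t within S)"
proof -
  let ?U = "feedback t0 f g \<phi> \<rho> t (x t) (z t) (w t)"
  have "((\<lambda>s. Lf_pow t0 f j (comp \<phi> k) s (x s)) has_real_derivative
      Lf_pow t0 f (Suc j) (comp \<phi> k) t (x t) + LgLf t0 f g j (comp \<phi> k) t (x t) \<bullet> ?U)
      (at t within S)"
    by (rule has_real_derivative_Lf_pow_trajectory[OF f smooth_on_comp[OF \<phi>]])
      (use \<open>S \<subseteq> {t0..}\<close> \<open>t \<in> S\<close> x in auto)
  moreover have "((\<lambda>s. half_square_deriv (z_jet \<rho> z w k s) j) has_real_derivative
      half_square_deriv (z_jet \<rho> z w k t) (Suc j)) (at t within S)"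
  proof (rule has_real_derivative_half_square_deriv)
    fix i assume "i \<le> j"
    then show "((\<lambda>s. z_jet \<rho> z w k s i) has_real_derivative z_jet \<rho> z w k t (Suc i))
        (at t within S)"
      using \<open>j < \<rho> k\<close> by (intro has_real_derivative_z_jet z z_last) auto
  qed
  ultimately have "(defect t0 f \<phi> \<rho> x z w k j has_real_derivative
      Lf_pow t0 f (Suc j) (comp \<phi> k) t (x t) + LgLf t0 f g j (comp \<phi> k) t (x t) \<bullet> ?U
      + half_square_deriv (z_jet \<rho> z w k t) (Suc j)) (at t within S)"
    unfolding defect_def by (rule DERIV_add)
  moreover have "t0 \<le> t" using \<open>S \<subseteq> {t0..}\<close> \<open>t \<in> S\<close> by auto
  ultimately show ?thesis
    using defect_derivative_eq[where x = x and k = k, OF reldeg inv \<open>t0 \<le> t\<close> \<open>j < \<rho> k\<close>] by simp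
qed

lemma AE_has_vector_derivative_defect:
  assumes f: "smooth_on (dom t0) (\<lambda>(t,y). f t y)" and \<phi>: "smooth_on (dom t0) (\<lambda>(t,y). \<phi> t y)"
    and reldeg: "has_relative_degree t0 f g \<phi> \<rho>"
    and Omega_inv: "\<forall>(t,y)\<in>dom t0. invertible (Omega_g t0 f g \<phi> \<rho> t y)"
    and x_ode: "AE t in lebesgue. t \<in> {t0..T} \<longrightarrow>
        (x has_vector_derivative
           (f t (x t) + g t (x t) *v feedback t0 f g \<phi> \<rho> t (x t) (z t) (w t))) (at t within {t0..T})"
    and z_ode: "AE t in lebesgue. t \<in> {t0..T} \<longrightarrow>
        (\<forall>k j. j + 2 \<le> \<rho> k \<longrightarrow>
           ((\<lambda>s. z s k j) has_vector_derivative z t k (j + 1)) (at t within {t0..T}))"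
    and z_last_ode: "AE t in lebesgue. t \<in> {t0..T} \<longrightarrow>
        (\<forall>k. ((\<lambda>s. z s k (\<rho> k - 1)) has_vector_derivative w t $ k) (at t within {t0..T}))"
  shows "AE s in lebesgue. s \<in> {t0..T} \<longrightarrow> (\<forall>j<\<rho> k.
      (defect t0 f \<phi> \<rho> x z w k j has_vector_derivative
        (if Suc j < \<rho> k then defect t0 f \<phi> \<rho> x z w k (Suc j) s else 0)) (at s within {t0..T}))"
  using x_ode z_ode z_last_ode
proof eventually_elim
  case (elim s)
  show ?case
  proof (intro impI allI)
    fix j assume "s \<in> {t0..T}" "j < \<rho> k"
    then have "invertible (Omega_g t0 f g \<phi> \<rho> s (x s))" using Omega_inv by (auto simp: dom_def)
    then show "(defect t0 f \<phi> \<rho> x z w k j has_vector_derivative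
        (if Suc j < \<rho> k then defect t0 f \<phi> \<rho> x z w k (Suc j) s else 0)) (at s within {t0..T})"
      unfolding has_real_derivative_iff_has_vector_derivative[symmetric]
      by (rule has_real_derivative_defect[OF f \<phi> reldeg])
        (use elim \<open>s \<in> {t0..T}\<close> \<open>j < \<rho> k\<close> in auto)
  qed
qed

theorem theorem1:
  fixes f :: "real \<Rightarrow> real^'n \<Rightarrow> real^'n"
    and g :: "real \<Rightarrow> real^'n \<Rightarrow> real^'m^'n"
    and \<phi> :: "real \<Rightarrow> real^'n \<Rightarrow> real^'m"
    and \<rho> :: "'m \<Rightarrow> nat"
    and t0 T :: real
    and x0 :: "real^'n"
    and w :: "real \<Rightarrow> real^'m"
    and x :: "real \<Rightarrow> real^'n"
    and z :: "real \<Rightarrow> 'm \<Rightarrow> nat \<Rightarrow> real"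
  assumes f_smooth: "smooth_on (dom t0) (\<lambda>(t,y). f t y)"
    and g_smooth: "smooth_on (dom t0) (\<lambda>(t,y). g t y)"
    and \<phi>_smooth: "smooth_on (dom t0) (\<lambda>(t,y). \<phi> t y)"
    and reldeg: "has_relative_degree t0 f g \<phi> \<rho>"
    and Omega_inv: "\<forall>(t,y)\<in>dom t0. invertible (Omega_g t0 f g \<phi> \<rho> t y)"
    and x0_safe: "\<forall>k. \<phi> t0 x0 $ k < 0"
    and T_gt: "T > t0"
    and w_L1: "w absolutely_integrable_on {t0..T}"
    and x_ac: "absolutely_continuous_on {t0..T} x"
    and z_ac: "\<forall>k j. j < \<rho> k \<longrightarrow> absolutely_continuous_on {t0..T} (\<lambda>t. z t k j)"
    and x_init: "x t0 = x0"
    and z_init0: "\<forall>k. z t0 k 0 = sqrt (- 2 * \<phi> t0 x0 $ k)"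
    and z_init: "\<forall>k i. 1 \<le> i \<and> i \<le> \<rho> k - 1 \<longrightarrow>
        z t0 k i = - (Lf_pow t0 f i (comp \<phi> k) t0 x0 + Ssum (z t0 k) i) / z t0 k 0"
    and x_ode: "AE t in lebesgue. t \<in> {t0..T} \<longrightarrow>
        (x has_vector_derivative
           (f t (x t) + g t (x t) *v feedback t0 f g \<phi> \<rho> t (x t) (z t) (w t))) (at t within {t0..T})"
    and z_ode: "AE t in lebesgue. t \<in> {t0..T} \<longrightarrow>
        (\<forall>k j. j + 2 \<le> \<rho> k \<longrightarrow>
           ((\<lambda>s. z s k j) has_vector_derivative z t k (j + 1)) (at t within {t0..T}))"
    and z_last_ode: "AE t in lebesgue. t \<in> {t0..T} \<longrightarrow>
        (\<forall>k. ((\<lambda>s. z s k (\<rho> k - 1)) has_vector_derivative w t $ k) (at t within {t0..T}))"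
  shows "\<forall>t\<in>{t0..T}. \<forall>k. \<phi> t (x t) $ k \<le> 0"
proof (intro ballI allI)
  fix t k assume "t \<in> {t0..T}"
  have "1 \<le> \<rho> k" using reldeg unfolding has_relative_degree_def by blast
  note deriv =
    AE_has_vector_derivative_defect[OF f_smooth \<phi>_smooth reldeg Omega_inv x_ode z_ode z_last_ode]
  have "defect t0 f \<phi> \<rho> x z w k 0 t = 0"
  proof (rule derivative_chain_vanishes[OF deriv])
    fix j assume "j < \<rho> k"
    show "absolutely_continuous_on {t0..T} (defect t0 f \<phi> \<rho> x z w k j)"
      by (rule absolutely_continuous_on_defect[OF f_smooth \<phi>_smooth x_ac])
        (use z_ac \<open>j < \<rho> k\<close> in auto)
    show "defect t0 f \<phi> \<rho> x z w k j t0 = 0"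
      by (rule defect_initial) (use x_init x0_safe z_init0 z_init \<open>j < \<rho> k\<close> in auto)
  qed (use \<open>1 \<le> \<rho> k\<close> \<open>t \<in> {t0..T}\<close> in auto)
  moreover have "defect t0 f \<phi> \<rho> x z w k 0 t = \<phi> t (x t) $ k + (z t k 0)\<^sup>2 / 2"
    using \<open>1 \<le> \<rho> k\<close> by (rule defect_0)
  moreover have "(z t k 0)\<^sup>2 / 2 \<ge> 0" by simp
  ultimately show "\<phi> t (x t) $ k \<le> 0" by linarith
qed

end
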